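(* Let $P\in\mathcal{P}$ and $\alpha\in(0,1]$. Then $\limsup_n P_n^\alpha\subset P^\alpha$ almost surely.
   Context: $\mathcal{P}$ denotes the set of all probability measures on $(\mathbb{R}^d,\mathcal{B}_d)$, $\mathcal{B}_d$ the Borel $\sigma$-algebra, endowed with the topology of weak convergence. For $R\in\mathcal{P}$ and $\alpha\in(0,1]$, the $\alpha$-trimming of $R$ is $R^\alpha=\{Q\in\mathcal{P} : Q(B)\le \alpha^{-1}R(B)\text{ for all } B\in\mathcal{B}_d\}$. $\{X_i\}_{i\ge1}$ are i.i.d. random vectors in $\mathbb{R}^d$ with law $P$, and $P_n=\frac1n\sum_{i=1}^n\delta_{X_i}$ is the empirical probability. For sets $A_n\subset\mathcal{P}$, $\liminf_n A_n=\{Q\in\mathcal{P}:\exists\, Q_n\in A_n \text{ for all } n \text{ with } Q_n\to Q \text{ weakly}\}$ and $\limsup_n A_n=\{Q\in\mathcal{P}:\exists\, n_1<n_2<\dots,\ Q_{n_k}\in A_{n_k},\ Q_{n_k}\to Q\text{ weakly}\}$. *)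

theory Defs
  imports "HOL-Probability.Probability"
begin

definition probs :: "('a::topological_space) measure set" where
  "probs = {Q. prob_space Q \<and> sets Q = sets borel}"

definition weak_conv :: "(nat \<Rightarrow> ('a::topological_space) measure) \<Rightarrow> 'a measure \<Rightarrow> bool" where
  "weak_conv Qs Q \<longleftrightarrow>
     (\<forall>f :: 'a \<Rightarrow> real. continuous_on UNIV f \<and> bounded (range f) \<longrightarrow>
        (\<lambda>n. \<integral>x. f x \<partial>(Qs n)) \<longlonglongrightarrow> (\<integral>x. f x \<partial>Q))"

definition trim :: "real \<Rightarrow> ('a::topological_space) measure \<Rightarrow> 'a measure set" where
  "trim \<alpha> R = {Q \<in> probs. \<forall>B \<in> sets borel. measure Q B \<le> measure R B / \<alpha>}"

definition lim_sup_set :: "(nat \<Rightarrow> ('a::topological_space) measure set) \<Rightarrow> 'a measure set" where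
  "lim_sup_set A = {Q \<in> probs. \<exists>r Qs. strict_mono r \<and> (\<forall>k. Qs k \<in> A (r k)) \<and> weak_conv Qs Q}"

definition emp :: "(nat \<Rightarrow> 'w \<Rightarrow> ('a::topological_space)) \<Rightarrow> nat \<Rightarrow> 'w \<Rightarrow> 'a measure" where
  "emp X n w = measure_of UNIV (sets borel)
      (\<lambda>B. ennreal (real (card {i \<in> {1..n}. X i w \<in> B}) / real n))"

end

theory Submission
  imports Defs
begin

(* Fix a countable basis Bs of R^d and let G range over the countable family of
   finite unions of basis sets.  By Hoeffding's inequality and Borel-Cantelli, almost surely
   limsup_n P_n(G) <= P(G) for every such G simultaneously.  Fix such an outcome and a weak
   limit Q = lim_k Q_k with Q_k in P_{r k}^alpha.  Since G is open, the portmanteau bound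
   gives Q(G) <= liminf_k Q_k(G) <= limsup_k P_{r k}(G)/alpha <= P(G)/alpha.  Every open set
   is an increasing union of such G, so the bound extends to open sets by continuity of Q
   from below, and then to all Borel sets by outer regularity of P. *)

(* Empirical frequency of G: the fraction of X 1 w, ..., X n w lying in G (0 for n = 0). *)
definition emp_freq :: "(nat \<Rightarrow> 'w \<Rightarrow> 'a) \<Rightarrow> nat \<Rightarrow> 'w \<Rightarrow> 'a set \<Rightarrow> real" where
  "emp_freq X n w G = real (card {i \<in> {1..n}. X i w \<in> G}) / real n"

(* The empirical frequency is the sample mean of the indicators of G; this is the form in
   which Hoeffding's inequality applies. *)
lemma emp_freq_eq_mean:
  "emp_freq X n w G = (\<Sum>i\<in>{1..n}. indicator G (X i w)) / real n"
proof -
  have "(\<Sum>i\<in>{1..n}. indicator G (X i w) :: real) = (\<Sum>i\<in>{1..n}. indicator {i. X i w \<in> G} i)"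
    by (intro sum.cong) (auto simp: indicator_def)
  also have "\<dots> = real (card ({1..n} \<inter> {i. X i w \<in> G}))"
    by (simp flip: sum_indicator_eq_card add: of_nat_sum real_of_nat_indicator)
  finally show ?thesis
    unfolding emp_freq_def by (simp add: Int_def conj_commute)
qed

lemma (in prob_space) emp_freq_tail_bound:
  fixes X :: "nat \<Rightarrow> 'a \<Rightarrow> 'b::topological_space" and P :: "'b measure"
  assumes [measurable]: "\<And>i. X i \<in> borel_measurable M"
    and indep: "indep_vars (\<lambda>_. borel) X UNIV"
    and distr_X: "\<And>i. distr M borel (X i) = P"
    and [measurable]: "G \<in> sets borel" and eps: "\<epsilon> > 0"
  shows "prob {w\<in>space M. measure P G + \<epsilon> \<le> emp_freq X n w G} \<le> exp (-2 * \<epsilon>\<^sup>2) ^ n"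
proof (cases "n = 0")
  case True
  then show ?thesis by (simp add: emp_freq_def)
next
  case False
  define Z where "Z i w = (indicator G (X i w) :: real)" for i w
  have [measurable]: "Z i \<in> borel_measurable M" for i unfolding Z_def by measurable
  have distr_Z: "distr M borel (Z i) = distr P borel (indicator G)" for i
    unfolding Z_def distr_X[of i, symmetric] by (subst distr_distr) (auto simp: comp_def)
  have mean_Z: "expectation (Z 1) = measure P G"
  proof -
    have "space P = UNIV" using distr_X[of 1] by (metis space_distr space_borel)
    moreover have "expectation (Z 1) = integral\<^sup>L (distr M borel (X 1)) (indicator G)"
      unfolding Z_def by (subst integral_distr) auto
    ultimately show ?thesis using distr_X[of 1] by simp
  qed
  interpret H: Hoeffding_ineq_iid M "{1..n}" Z "Z 1" 0 1 "expectation (Z 1)"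
  proof unfold_locales
    show "indep_vars (\<lambda>_. borel) Z {1..n}"
      unfolding Z_def by (rule indep_vars_subset[OF indep_vars_compose2[OF indep]]) auto
    show "distr M borel (Z i) = distr M borel (Z 1)" for i by (simp add: distr_Z)
    show "AE x in M. Z 1 x \<in> {0..1}" by (auto simp: Z_def indicator_def)
  qed auto
  have "prob {w\<in>space M. measure P G + \<epsilon> \<le> emp_freq X n w G}
        \<le> exp (-2 * real n * \<epsilon>\<^sup>2 / (1 - 0)\<^sup>2)"
    using H.Hoeffding_ineq_ge'[of \<epsilon>] eps False
    unfolding emp_freq_eq_mean mean_Z Z_def by simp
  also have "\<dots> = exp (-2 * \<epsilon>\<^sup>2) ^ n"
    by (simp add: exp_of_nat_mult[symmetric] mult_ac)
  finally show ?thesis .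
qed

(* The tail bounds are summable, so by Borel-Cantelli the frequency is eventually below
   P(G) + eps almost surely. *)
lemma (in prob_space) emp_freq_eventually_below:
  fixes X :: "nat \<Rightarrow> 'a \<Rightarrow> 'b::topological_space" and P :: "'b measure"
  assumes [measurable]: "\<And>i. X i \<in> borel_measurable M"
    and "indep_vars (\<lambda>_. borel) X UNIV"
    and "\<And>i. distr M borel (X i) = P"
    and [measurable]: "G \<in> sets borel" and eps: "\<epsilon> > 0"
  shows "AE w in M. eventually (\<lambda>n. emp_freq X n w G < measure P G + \<epsilon>) sequentially"
proof -
  define A where "A n = {w\<in>space M. measure P G + \<epsilon> \<le> emp_freq X n w G}" for n
  have [measurable]: "A n \<in> sets M" for n
    unfolding A_def emp_freq_eq_mean by measurable
  have "summable (\<lambda>n. measure M (A n))"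
  proof (rule summable_comparison_test'[OF summable_geometric])
    show "norm (exp (-2 * \<epsilon>\<^sup>2)) < 1" using eps by simp
    show "norm (measure M (A n)) \<le> exp (-2 * \<epsilon>\<^sup>2) ^ n" for n
      using emp_freq_tail_bound[OF assms] unfolding A_def by simp
  qed
  then have "AE w in M. eventually (\<lambda>n. w \<in> space M - A n) sequentially"
    by (intro borel_cantelli_AE1) (auto simp: less_top[symmetric])
  then show ?thesis
    by (rule eventually_mono) (auto elim!: eventually_mono simp: A_def)
qed

(* Countably many null sets: almost surely the bound holds simultaneously for all G in a
   countable family of Borel sets and all eps = 1 / Suc m. *)
lemma (in prob_space) AE_emp_freq_family:
  fixes X :: "nat \<Rightarrow> 'a \<Rightarrow> 'b::topological_space" and P :: "'b measure"
  assumes "\<And>i. X i \<in> borel_measurable M"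
    and "indep_vars (\<lambda>_. borel) X UNIV"
    and "\<And>i. distr M borel (X i) = P"
    and "countable \<G>" and "\<G> \<subseteq> sets borel"
  shows "AE w in M. \<forall>G\<in>\<G>. \<forall>m::nat.
           eventually (\<lambda>n. emp_freq X n w G < measure P G + 1 / real (Suc m)) sequentially"
  using assms
  by (intro AE_ball_countable' AE_all_countable[THEN iffD2] allI emp_freq_eventually_below) auto

(* For n >= 1 the empirical probability is the image of the uniform distribution on {1..n}
   under i |-> X i w; in particular it is a genuine measure. *)
lemma emp_eq_distr:
  fixes X :: "nat \<Rightarrow> 'w \<Rightarrow> 'a::topological_space"
  assumes "n \<ge> 1"
  shows "emp X n w = distr (uniform_measure (count_space UNIV) {1..n}) borel (\<lambda>i. X i w)"
    (is "_ = ?N")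
proof -
  have "emp X n w = measure_of UNIV (sets borel) (emeasure ?N)"
    unfolding emp_def
  proof (rule measure_of_eq)
    fix B :: "'a set" assume "B \<in> sigma_sets UNIV (sets borel)"
    then have "B \<in> sets borel" by (metis sets.sigma_sets_eq space_borel)
    then show "ennreal (real (card {i \<in> {1..n}. X i w \<in> B}) / real n) = emeasure ?N B"
      using assms by (subst emeasure_distr)
        (auto simp: divide_ennreal ennreal_of_nat_eq_real_of_nat Int_def conj_commute)
  qed auto
  also have "\<dots> = ?N" using measure_of_of_measure[of ?N] by simp
  finally show ?thesis .
qed

lemma measure_emp:
  fixes X :: "nat \<Rightarrow> 'w \<Rightarrow> 'a::topological_space"
  assumes "n \<ge> 1" and "B \<in> sets borel"
  shows "measure (emp X n w) B = emp_freq X n w B"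
  using assms unfolding emp_eq_distr[OF assms(1)] emp_freq_def
  by (subst measure_distr) (auto simp: measure_uniform_measure Int_def conj_commute)

lemma space_probs: "Q \<in> probs \<Longrightarrow> space Q = UNIV"
  unfolding probs_def by (metis (mono_tags, lifting) mem_Collect_eq sets_eq_imp_space_eq space_borel)

lemma measurable_probs: "Q \<in> probs \<Longrightarrow> f \<in> borel_measurable borel \<Longrightarrow> f \<in> borel_measurable Q"
  unfolding probs_def using measurable_cong_sets[of Q borel borel borel] by auto

lemma integral_le_measure:
  fixes f :: "'a::topological_space \<Rightarrow> real"
  assumes Q: "Q \<in> probs" and f: "f \<in> borel_measurable borel" and G: "G \<in> sets borel"
    and f_nonneg: "\<And>x. 0 \<le> f x" and f_le: "\<And>x. f x \<le> indicator G x"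
  shows "(\<integral>x. f x \<partial>Q) \<le> measure Q G"
proof -
  interpret prob_space Q using Q unfolding probs_def by auto
  have "(\<integral>x. f x \<partial>Q) \<le> (\<integral>x. indicator G x \<partial>Q)"
  proof (intro integral_mono integrable_const_bound[where B=1])
    show "f \<in> borel_measurable Q" using measurable_probs[OF Q f] .
    show "indicator G \<in> borel_measurable Q"
      using measurable_probs[OF Q borel_measurable_indicator[OF G]] .
    show "AE x in Q. norm (f x) \<le> 1"
      using f_nonneg f_le
      by (intro AE_I2) (metis indicator_le_1 order_trans real_norm_def abs_of_nonneg)
  qed (auto simp: f_le)
  also have "\<dots> = measure Q G" using space_probs[OF Q] by simp
  finally show ?thesis .
qed

lemma open_indicator_approx:
  fixes G :: "'a::metric_space set"
  assumes "open G"
  obtains f :: "nat \<Rightarrow> 'a \<Rightarrow> real"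
  where "\<And>m. continuous_on UNIV (f m)" and "\<And>m x. 0 \<le> f m x"
    and "\<And>m x. f m x \<le> indicator G x" and "\<And>x. (\<lambda>m. f m x) \<longlonglongrightarrow> indicator G x"
proof (cases "G = UNIV")
  case True
  show ?thesis by (rule that[of "\<lambda>_ _. 1"]) (auto simp: True)
next
  case False
  define f where "f m x = min 1 (real m * infdist x (- G))" for m :: nat and x
  have outside: "f m x = 0" if "x \<notin> G" for m x
    using that by (simp add: f_def infdist_zero)
  show ?thesis
  proof (rule that[of f])
    show "continuous_on UNIV (f m)" for m unfolding f_def by (intro continuous_intros)
    show "0 \<le> f m x" for m x unfolding f_def by (auto simp: infdist_nonneg)
    show "f m x \<le> indicator G x" for m x
      by (cases "x \<in> G") (auto simp: outside f_def)
    show "(\<lambda>m. f m x) \<longlonglongrightarrow> indicator G x" for x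
    proof (cases "x \<in> G")
      case True
      have d: "infdist x (- G) > 0"
        using assms False True by (intro infdist_pos_not_in_closed) auto
      have "eventually (\<lambda>m. 1 / infdist x (- G) < real m) sequentially"
        using filterlim_real_sequentially unfolding filterlim_at_top_dense by blast
      then have "eventually (\<lambda>m. f m x = 1) sequentially"
        by (rule eventually_mono) (use d in \<open>auto simp: f_def field_simps\<close>)
      then show ?thesis using True by (simp add: tendsto_eventually)
    qed (simp add: outside)
  qed
qed

(* Portmanteau inequality for open sets: Q(G) <= liminf Q_k(G) for a weak limit Q, stated as
   an eventual upper bound passing to the limit. *)
lemma weak_conv_open_le:
  fixes Qs :: "nat \<Rightarrow> 'a::metric_space measure"
  assumes Qs: "\<And>k. Qs k \<in> probs" and Q: "Q \<in> probs" and conv: "weak_conv Qs Q"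
    and G: "open G" and bound: "eventually (\<lambda>k. measure (Qs k) G \<le> c) sequentially"
  shows "measure Q G \<le> c"
proof -
  interpret prob_space Q using Q unfolding probs_def by auto
  obtain f :: "nat \<Rightarrow> 'a \<Rightarrow> real"
    where f_cont: "\<And>m. continuous_on UNIV (f m)" and f_nonneg: "\<And>m x. 0 \<le> f m x"
    and f_le: "\<And>m x. f m x \<le> indicator G x" and f_lim: "\<And>x. (\<lambda>m. f m x) \<longlonglongrightarrow> indicator G x"
    using open_indicator_approx[OF G] by blast
  have f_borel: "f m \<in> borel_measurable borel" for m
    using f_cont by (simp add: borel_measurable_continuous_onI)
  have f_norm: "norm (f m x) \<le> 1" for m x
    using f_nonneg[of m x] f_le[of m x] by (cases "x \<in> G") auto
  have "(\<integral>x. f m x \<partial>Q) \<le> c" for m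
  proof (rule tendsto_upperbound)
    have "bounded (range (f m))"
      using f_norm by (auto simp: bounded_iff)
    then show "(\<lambda>k. \<integral>x. f m x \<partial>Qs k) \<longlonglongrightarrow> (\<integral>x. f m x \<partial>Q)"
      using conv f_cont unfolding weak_conv_def by blast
    have int_le: "(\<integral>x. f m x \<partial>Qs k) \<le> measure (Qs k) G" for k
      using G by (intro integral_le_measure[OF Qs f_borel _ f_nonneg f_le]) auto
    show "eventually (\<lambda>k. (\<integral>x. f m x \<partial>Qs k) \<le> c) sequentially"
      using bound by (rule eventually_mono) (rule order_trans[OF int_le])
  qed auto
  moreover have "(\<lambda>m. \<integral>x. f m x \<partial>Q) \<longlonglongrightarrow> (\<integral>x. indicator G x \<partial>Q)"
  proof (rule integral_dominated_convergence[where w="\<lambda>_. 1"])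
    show "indicator G \<in> borel_measurable Q"
      using measurable_probs[OF Q borel_measurable_indicator[OF borel_open[OF G]]] .
    show "f m \<in> borel_measurable Q" for m using measurable_probs[OF Q f_borel] .
    show "AE x in Q. norm (f m x) \<le> 1" for m using f_norm by simp
  qed (simp_all add: f_lim)
  moreover have "(\<integral>x. indicator G x \<partial>Q) = measure Q G"
    using space_probs[OF Q] by simp
  ultimately show ?thesis by (intro tendsto_upperbound) auto
qed

lemma le_of_le_plus_inverse_Suc:
  fixes x y :: real
  assumes "\<And>m::nat. x \<le> y + 1 / real (Suc m)"
  shows "x \<le> y"
proof (rule field_le_epsilon)
  fix e :: real assume "0 < e"
  then obtain m :: nat where "inverse (real (Suc m)) < e" using reals_Archimedean by blast
  then show "x \<le> y + e" using assms[of m] by (simp add: inverse_eq_divide)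
qed

lemma lim_sup_trim_open_bound:
  fixes X :: "nat \<Rightarrow> 'w \<Rightarrow> 'a::metric_space" and P :: "'a measure"
  assumes \<alpha>: "0 < \<alpha>" and G: "open G"
    and freq: "\<And>m::nat. eventually (\<lambda>n. emp_freq X n w G < measure P G + 1 / real (Suc m)) sequentially"
    and lim_pt: "Q \<in> lim_sup_set (\<lambda>n. trim \<alpha> (emp X n w))"
  shows "measure Q G \<le> measure P G / \<alpha>"
proof -
  obtain r Qs where Q: "Q \<in> probs" and r: "strict_mono r"
    and Qs: "\<And>k. Qs k \<in> trim \<alpha> (emp X (r k) w)" and conv: "weak_conv Qs Q"
    using lim_pt unfolding lim_sup_set_def by blast
  have r_lim: "filterlim r sequentially sequentially" using r by (rule filterlim_subseq)
  have "measure Q G * \<alpha> \<le> measure P G + 1 / real (Suc m)" for m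
  proof -
    have "eventually (\<lambda>k. emp_freq X (r k) w G < measure P G + 1 / real (Suc m) \<and> 1 \<le> r k)
            sequentially"
      using freq[of m] eventually_ge_at_top[of 1] r_lim
      unfolding filterlim_iff by (blast intro: eventually_conj)
    then have "eventually (\<lambda>k. measure (Qs k) G \<le> (measure P G + 1 / real (Suc m)) / \<alpha>)
                 sequentially"
    proof (rule eventually_mono)
      fix k assume k: "emp_freq X (r k) w G < measure P G + 1 / real (Suc m) \<and> 1 \<le> r k"
      have "measure (Qs k) G \<le> measure (emp X (r k) w) G / \<alpha>"
        using Qs[of k] G unfolding trim_def by auto
      also have "\<dots> = emp_freq X (r k) w G / \<alpha>"
        using k G by (simp add: measure_emp)
      also have "\<dots> \<le> (measure P G + 1 / real (Suc m)) / \<alpha>"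
        using k \<alpha> by (intro divide_right_mono) auto
      finally show "measure (Qs k) G \<le> (measure P G + 1 / real (Suc m)) / \<alpha>" .
    qed
    moreover have "Qs k \<in> probs" for k using Qs[of k] unfolding trim_def by auto
    ultimately have "measure Q G \<le> (measure P G + 1 / real (Suc m)) / \<alpha>"
      using weak_conv_open_le[OF _ Q conv G] by blast
    then show ?thesis using \<alpha> by (simp add: pos_le_divide_eq)
  qed
  then have "measure Q G * \<alpha> \<le> measure P G" by (rule le_of_le_plus_inverse_Suc)
  then show ?thesis using \<alpha> by (simp add: pos_le_divide_eq)
qed

(* The domination Q <= P/alpha extends from finite unions of basis sets to all open sets,
   since an open set is the increasing union of finite unions of the basis sets it contains. *)
lemma domination_open_of_basis:
  fixes Q P :: "'a::topological_space measure"
  assumes Q: "Q \<in> probs" and P: "P \<in> probs" and \<alpha>: "0 < \<alpha>"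
    and basis: "topological_basis Bs" and countable: "countable Bs"
    and finite_unions: "\<And>F. finite F \<Longrightarrow> F \<subseteq> Bs \<Longrightarrow> measure Q (\<Union>F) \<le> measure P (\<Union>F) / \<alpha>"
    and U: "open U"
  shows "measure Q U \<le> measure P U / \<alpha>"
proof -
  interpret Q: prob_space Q using Q unfolding probs_def by auto
  interpret P: prob_space P using P unfolding probs_def by auto
  define C where "C = {b \<in> Bs. b \<subseteq> U}"
  have Bs_open: "b \<in> Bs \<Longrightarrow> open b" for b using topological_basis_open[OF basis] .
  have "\<Union>C = U"
  proof -
    obtain B' where "B' \<subseteq> Bs" "\<Union>B' = U" using basis U unfolding topological_basis_def by blast
    then show ?thesis unfolding C_def by auto
  qed
  show ?thesis
  proof (cases "C = {}")
    case True
    then show ?thesis using \<open>\<Union>C = U\<close> by auto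
  next
    case False
    define e where "e = from_nat_into C"
    have range_e: "range e = C"
      unfolding e_def using False countable by (simp add: C_def range_from_nat_into)
    have e_C: "e k \<in> C" for k using range_e by auto
    define A where "A k = \<Union>(e ` {..k})" for k
    have A_bound: "measure Q (A k) \<le> measure P (A k) / \<alpha>" for k
      unfolding A_def using range_e by (intro finite_unions) (auto simp: C_def)
    have A_sub: "A k \<subseteq> U" for k unfolding A_def using range_e C_def by auto
    have A_sets: "A k \<in> sets borel" for k
      using e_C unfolding A_def by (intro borel_open open_UN) (auto simp: C_def Bs_open)
    have "(\<Union>k. A k) = U"
      unfolding A_def using range_e \<open>\<Union>C = U\<close> by auto
    moreover have "incseq A" unfolding A_def incseq_def by (intro allI impI UN_mono) auto
    ultimately have "(\<lambda>k. measure Q (A k)) \<longlonglongrightarrow> measure Q U"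
      using Q.finite_Lim_measure_incseq[of A] A_sets Q unfolding probs_def by auto
    moreover have "measure Q (A k) \<le> measure P U / \<alpha>" for k
    proof -
      have "measure P (A k) \<le> measure P U"
        using A_sub A_sets U P by (intro P.finite_measure_mono) (auto simp: probs_def)
      then show ?thesis
        using A_bound[of k] \<alpha> by (meson divide_right_mono less_imp_le order_trans)
    qed
    ultimately show ?thesis by (intro tendsto_upperbound) auto
  qed
qed

(* By outer regularity of P, the domination Q <= P/alpha extends from open sets to all
   Borel sets of a Polish space. *)
lemma domination_borel_of_open:
  fixes Q P :: "'a::polish_space measure"
  assumes Q: "Q \<in> probs" and P: "P \<in> probs" and \<alpha>: "0 < \<alpha>"
    and open_bound: "\<And>U. open U \<Longrightarrow> measure Q U \<le> measure P U / \<alpha>"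
    and B: "B \<in> sets borel"
  shows "measure Q B \<le> measure P B / \<alpha>"
proof -
  interpret Q: prob_space Q using Q unfolding probs_def by auto
  interpret P: prob_space P using P unfolding probs_def by auto
  have "measure Q B * \<alpha> \<le> measure P B + e" if e: "e > 0" for e
  proof -
    have "emeasure P B < ennreal (measure P B + e)"
      using e by (simp add: P.emeasure_eq_measure ennreal_lessI)
    then have "(INF U \<in> {U. B \<subseteq> U \<and> open U}. emeasure P U) < ennreal (measure P B + e)"
      using outer_regular[of P B] P B by (simp add: probs_def)
    then obtain U where U: "B \<subseteq> U" "open U" and "emeasure P U < ennreal (measure P B + e)"
      unfolding INF_less_iff by blast
    then have PU: "measure P U < measure P B + e"
      by (simp add: P.emeasure_eq_measure ennreal_less_iff)
    have "measure Q B \<le> measure Q U"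
      using U B Q by (intro Q.finite_measure_mono) (auto simp: probs_def)
    also have "\<dots> \<le> measure P U / \<alpha>" using open_bound[OF U(2)] .
    finally have "measure Q B * \<alpha> \<le> measure P U" using \<alpha> by (simp add: pos_le_divide_eq)
    with PU show ?thesis by linarith
  qed
  then have "measure Q B * \<alpha> \<le> measure P B" by (rule field_le_epsilon)
  then show ?thesis using \<alpha> by (simp add: pos_le_divide_eq)
qed

theorem theorem11:
  fixes \<Omega> :: "'w measure" and X :: "nat \<Rightarrow> 'w \<Rightarrow> 'a::euclidean_space"
    and P :: "'a measure" and \<alpha> :: real
  assumes "prob_space \<Omega>"
    and "P \<in> probs"
    and "0 < \<alpha>" and "\<alpha> \<le> 1"
    and "\<And>i. X i \<in> borel_measurable \<Omega>"
    and "prob_space.indep_vars \<Omega> (\<lambda>_. borel) X UNIV"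
    and "\<And>i. distr \<Omega> borel (X i) = P"
  shows "AE w in \<Omega>. lim_sup_set (\<lambda>n. trim \<alpha> (emp X n w)) \<subseteq> trim \<alpha> P"
proof -
  interpret prob_space \<Omega> by fact
  obtain Bs :: "'a set set" where "countable Bs" and basis: "topological_basis Bs"
    using ex_countable_basis by blast
  define \<G> where "\<G> = Union ` {F. finite F \<and> F \<subseteq> Bs}"
  have \<G>_open: "open G" if "G \<in> \<G>" for G
    using that topological_basis_open[OF basis] unfolding \<G>_def by auto
  have "countable \<G>"
    unfolding \<G>_def using countable_Collect_finite_subset[OF \<open>countable Bs\<close>] by simp
  then have "AE w in \<Omega>. \<forall>G\<in>\<G>. \<forall>m::nat.
               eventually (\<lambda>n. emp_freq X n w G < measure P G + 1 / real (Suc m)) sequentially"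
    using assms \<G>_open by (intro AE_emp_freq_family) auto
  then show ?thesis
  proof (rule eventually_mono, intro subsetI)
    fix w Q
    assume freq: "\<forall>G\<in>\<G>. \<forall>m::nat.
                    eventually (\<lambda>n. emp_freq X n w G < measure P G + 1 / real (Suc m)) sequentially"
      and lim_pt: "Q \<in> lim_sup_set (\<lambda>n. trim \<alpha> (emp X n w))"
    have Q: "Q \<in> probs" using lim_pt unfolding lim_sup_set_def by blast
    have \<G>_bound: "measure Q G \<le> measure P G / \<alpha>" if "G \<in> \<G>" for G
      using freq that \<G>_open by (intro lim_sup_trim_open_bound[OF \<open>0 < \<alpha>\<close> _ _ lim_pt]) auto
    have open_bound: "measure Q U \<le> measure P U / \<alpha>" if "open U" for U
    proof (rule domination_open_of_basis[OF Q \<open>P \<in> probs\<close> \<open>0 < \<alpha>\<close> basis \<open>countable Bs\<close> _ that])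
      fix F assume "finite F" "F \<subseteq> Bs"
      then show "measure Q (\<Union>F) \<le> measure P (\<Union>F) / \<alpha>"
        by (intro \<G>_bound) (auto simp: \<G>_def)
    qed
    show "Q \<in> trim \<alpha> P"
      using Q domination_borel_of_open[OF Q \<open>P \<in> probs\<close> \<open>0 < \<alpha>\<close> open_bound]
      unfolding trim_def by blast
  qed
qed

end
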